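(* For every integer $n\geq 1$, the polynomial $Q_n(x,y,z,t)$ satisfies the identity of polynomials $$Q_n(x,y,z,t)=Q_n(x+nz+nt,\,y,\,-t,\,-z).$$
   Context: The polynomials $Q_n=Q_n(x,y,z,t)\in\mathbb{Z}[x,y,z,t]$ are defined by $Q_1=1$ and, for $n\geq 1$, $$Q_{n+1}=\bigl[x+nz+(y+t)\bigl(n+y\,\partial_y\bigr)\bigr]Q_n,$$ where $\partial_y$ denotes partial differentiation with respect to $y$. *)

theory Defs
  imports "HOL-Computational_Algebra.Polynomial"
begin

text \<open>Z[x,y,z,t] is represented by nested univariate polynomials:
  innermost variable x, then z, then t, outermost variable y
  (so that the partial derivative in y is pderiv).\<close>

type_synonym mpoly4 = "int poly poly poly poly"

definition varX :: mpoly4 where "varX = [:[:[:[:0, 1:]:]:]:]"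
definition varZ :: mpoly4 where "varZ = [:[:[:0, 1:]:]:]"
definition varT :: mpoly4 where "varT = [:[:0, 1:]:]"
definition varY :: mpoly4 where "varY = [:0, 1:]"

definition dY :: "mpoly4 \<Rightarrow> mpoly4" where "dY p = pderiv p"

text \<open>Simultaneous substitution x := a, y := b, z := c, t := d.\<close>
definition eval4 :: "mpoly4 \<Rightarrow> mpoly4 \<Rightarrow> mpoly4 \<Rightarrow> mpoly4 \<Rightarrow> mpoly4 \<Rightarrow> mpoly4" where
  "eval4 a b c d p =
     poly (map_poly (\<lambda>c3. poly (map_poly (\<lambda>c2. poly (map_poly (\<lambda>c1. poly (map_poly of_int c1) a) c2) c) c3) d) p) b"

text \<open>Q 0 is an unused dummy value; Q 1 = 1 and
  Q (n+1) = [x + n z + (y+t)(n + y d/dy)] Q n for n >= 1.\<close>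
fun Q :: "nat \<Rightarrow> mpoly4" where
  "Q 0 = 0"
| "Q (Suc 0) = 1"
| "Q (Suc (Suc m)) =
     (let n = of_nat (Suc m) :: mpoly4; q = Q (Suc m) in
      varX * q + n * varZ * q + (varY + varT) * (n * q + varY * dY q))"

end

theory Submission
  imports Defs
begin

text \<open>Write \<open>D\<^sub>n = x + nz + (y + t)(n + y\<partial>\<^sub>y)\<close>, so that \<open>Q\<^sub>n\<^sub>+\<^sub>1 = D\<^sub>n Q\<^sub>n\<close>, and
  \<open>\<sigma>\<^sub>n\<close> for the substitution \<open>(x, z, t) \<mapsto> (x + nz + nt, -t, -z)\<close>; since it fixes \<open>y\<close>
  and substitutes \<open>y\<close>-free terms, it commutes with \<open>y\<partial>\<^sub>y\<close>. Two facts about these substitutions drive the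
  induction: \<open>\<sigma>\<^sub>n\<^sub>+\<^sub>1 \<sigma>\<^sub>n\<close> is the shift \<open>S : x \<mapsto> x + z + t\<close>, and \<open>\<sigma>\<^sub>n\<^sub>+\<^sub>1 D\<^sub>n = E\<^sub>n \<sigma>\<^sub>n\<^sub>+\<^sub>1\<close>
  for the explicit operator \<open>E\<^sub>n = x + (n+1)z + t + (y - z)(n + y\<partial>\<^sub>y)\<close>. Given \<open>\<sigma>\<^sub>n Q\<^sub>n = Q\<^sub>n\<close>
  they give \<open>\<sigma>\<^sub>n\<^sub>+\<^sub>1 Q\<^sub>n\<^sub>+\<^sub>1 = E\<^sub>n (S Q\<^sub>n)\<close>, so it remains to show \<open>E\<^sub>n (S Q\<^sub>n) = Q\<^sub>n\<^sub>+\<^sub>1\<close>.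
  This is a separate induction: \<open>S D\<^sub>n = (D\<^sub>n + z + t) S\<close>, and a direct computation with
  \<open>[y\<partial>\<^sub>y, y] = y\<close> gives the operator identity \<open>E\<^sub>n\<^sub>+\<^sub>1 (D\<^sub>n + z + t) = D\<^sub>n\<^sub>+\<^sub>1 E\<^sub>n\<close>.\<close>

locale comm_ring_hom =
  fixes hom :: "'a::comm_ring_1 \<Rightarrow> 'b::comm_ring_1"
  assumes hom_add: "hom (x + y) = hom x + hom y"
    and hom_mult: "hom (x * y) = hom x * hom y"
    and hom_one: "hom 1 = 1"
begin

lemma hom_zero: "hom 0 = 0"
  using hom_add[of 0 0] by simp

lemma hom_uminus: "hom (- x) = - hom x"
  using hom_add[of x "- x"] by (simp add: hom_zero add_eq_0_iff)

lemma hom_diff: "hom (x - y) = hom x - hom y"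
  using hom_add[of x "- y"] by (simp add: hom_uminus)

lemma hom_of_nat: "hom (of_nat n) = of_nat n"
  by (induction n) (simp_all add: hom_zero hom_one hom_add)

lemma hom_of_int: "hom (of_int i) = of_int i"
  by (cases i rule: int_cases) (simp_all add: hom_of_nat hom_diff hom_uminus hom_one)

lemma comm_ring_hom_map_poly: "comm_ring_hom (map_poly hom)"
proof
  show add: "map_poly hom (p + q) = map_poly hom p + map_poly hom q" for p q
    by (intro poly_eqI) (simp add: coeff_map_poly hom_zero hom_add)
  show "map_poly hom (p * q) = map_poly hom p * map_poly hom q" for p q
  proof (induction p rule: pCons_induct)
    case (pCons a p)
    then show ?case
      by (simp add: add map_poly_pCons map_poly_smult hom_zero hom_mult)
  qed simp
  show "map_poly hom 1 = 1"
    by (simp add: hom_one)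
qed

end

lemma comm_ring_hom_comp:
  "comm_ring_hom f \<Longrightarrow> comm_ring_hom g \<Longrightarrow> comm_ring_hom (g \<circ> f)"
  by (simp add: comm_ring_hom_def)

lemma comm_ring_hom_of_int: "comm_ring_hom of_int"
  by unfold_locales simp_all

lemma comm_ring_hom_poly: "comm_ring_hom (\<lambda>p. poly p x)"
  by unfold_locales simp_all

definition eval_poly :: "('a::zero \<Rightarrow> 'b::comm_semiring_1) \<Rightarrow> 'a poly \<Rightarrow> 'b \<Rightarrow> 'b" where
  "eval_poly h p x = poly (map_poly h p) x"

lemma eval_poly_0 [simp]: "eval_poly h 0 x = 0"
  by (simp add: eval_poly_def)

lemma comm_ring_hom_eval_poly:
  assumes "comm_ring_hom h"
  shows "comm_ring_hom (\<lambda>p. eval_poly h p x)"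
  using comm_ring_hom_comp[OF comm_ring_hom.comm_ring_hom_map_poly[OF assms] comm_ring_hom_poly]
  by (simp add: eval_poly_def comp_def)

lemma (in comm_ring_hom) hom_eval_poly:
  assumes "h 0 = 0"
  shows "hom (eval_poly h p x) = eval_poly (hom \<circ> h) p (hom x)"
  unfolding eval_poly_def
  by (induction p rule: pCons_induct) (simp_all add: assms map_poly_pCons hom_zero hom_add hom_mult)

lemma pderiv_eval_poly:
  fixes h :: "'a::idom \<Rightarrow> 'b::idom poly"
  assumes "comm_ring_hom h" and "\<And>u. pderiv (h u) = 0"
  shows "pderiv (eval_poly h p q) = eval_poly h (pderiv p) q * pderiv q"
proof -
  interpret comm_ring_hom "map_poly h"
    by (rule comm_ring_hom.comm_ring_hom_map_poly[OF assms(1)])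
  have h0: "h 0 = 0" using comm_ring_hom.hom_zero[OF assms(1)] .
  show ?thesis
    unfolding eval_poly_def
  proof (induction p rule: pCons_induct)
    case (pCons a p)
    then show ?case
      by (simp add: map_poly_pCons h0 pderiv_pCons hom_add pderiv_add pderiv_mult assms(2)
          algebra_simps)
  qed simp
qed

lemma eval4_conv_eval_poly:
  "eval4 a b c d p =
     eval_poly (\<lambda>p3. eval_poly (\<lambda>p2. eval_poly (\<lambda>p1. eval_poly of_int p1 a) p2 c) p3 d) p b"
  by (simp add: eval4_def eval_poly_def)

lemma comm_ring_hom_eval4: "comm_ring_hom (eval4 a b c d)"
  unfolding eval4_conv_eval_poly[abs_def]
  by (intro comm_ring_hom_eval_poly comm_ring_hom_of_int)

lemma eval4_vars [simp]:
  "eval4 a b c d varX = a" "eval4 a b c d varY = b"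
  "eval4 a b c d varZ = c" "eval4 a b c d varT = d"
  by (simp_all add: eval4_def varX_def varY_def varZ_def varT_def map_poly_pCons)

lemma comm_ring_hom_eval4_commute:
  assumes "comm_ring_hom \<psi>"
  shows "\<psi> (eval4 a b c d p) = eval4 (\<psi> a) (\<psi> b) (\<psi> c) (\<psi> d) p"
proof -
  interpret comm_ring_hom \<psi> by (rule assms)
  show ?thesis
    unfolding eval4_conv_eval_poly
    by (simp add: hom_eval_poly hom_of_int comp_def)
qed

lemma pderiv_eval4:
  assumes "pderiv a = 0" and "pderiv c = 0" and "pderiv d = 0"
  shows "pderiv (eval4 a b c d p) = eval4 a b c d (pderiv p) * pderiv b"
proof -
  have const: "pderiv (eval_poly h p q) = 0"
    if "comm_ring_hom h" "\<And>u. pderiv (h u) = 0" "pderiv q = 0"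
    for h :: "'c::idom \<Rightarrow> mpoly4" and p q
    using pderiv_eval_poly[of h] that by simp
  have hom1: "comm_ring_hom (\<lambda>p1. eval_poly of_int p1 a)"
    and hom2: "comm_ring_hom (\<lambda>p2. eval_poly (\<lambda>p1. eval_poly of_int p1 a) p2 c)"
    by (intro comm_ring_hom_eval_poly comm_ring_hom_of_int)+
  have "pderiv (eval_poly of_int p1 a) = 0" for p1
    by (rule const) (simp_all add: comm_ring_hom_of_int of_int_poly assms)
  then have "pderiv (eval_poly (\<lambda>p1. eval_poly of_int p1 a) p2 c) = 0" for p2
    using const[OF hom1] assms by blast
  then have "pderiv (eval_poly (\<lambda>p2. eval_poly (\<lambda>p1. eval_poly of_int p1 a) p2 c) p3 d) = 0" for p3
    using const[OF hom2] assms by blast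
  then show ?thesis
    unfolding eval4_conv_eval_poly
    by (intro pderiv_eval_poly comm_ring_hom_eval_poly hom2)
qed

definition euler_y :: "mpoly4 \<Rightarrow> mpoly4" where
  "euler_y q = varY * dY q"

lemma pderiv_vars [simp]:
  "pderiv varX = 0" "pderiv varZ = 0" "pderiv varT = 0" "pderiv varY = 1"
  by (simp_all add: varX_def varY_def varZ_def varT_def pderiv_pCons)

lemma euler_y_add: "euler_y (p + q) = euler_y p + euler_y q"
  by (simp add: euler_y_def dY_def pderiv_add algebra_simps)

lemma euler_y_diff: "euler_y (p - q) = euler_y p - euler_y q"
  by (simp add: euler_y_def dY_def pderiv_diff algebra_simps)

lemma euler_y_mult: "euler_y (p * q) = euler_y p * q + p * euler_y q"
  by (simp add: euler_y_def dY_def pderiv_mult algebra_simps)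

lemma euler_y_const:
  "euler_y varX = 0" "euler_y varZ = 0" "euler_y varT = 0" "euler_y 1 = 0" "euler_y (of_nat n) = 0"
  by (simp_all add: euler_y_def dY_def)

lemma euler_y_varY: "euler_y varY = varY"
  by (simp add: euler_y_def dY_def)

lemma eval4_euler_y:
  assumes "pderiv a = 0" and "pderiv c = 0" and "pderiv d = 0"
  shows "eval4 a varY c d (euler_y p) = euler_y (eval4 a varY c d p)"
  using comm_ring_hom.hom_mult[OF comm_ring_hom_eval4]
  by (simp add: euler_y_def dY_def pderiv_eval4[OF assms])

definition step :: "nat \<Rightarrow> mpoly4 \<Rightarrow> mpoly4" where
  "step n q = (varX + of_nat n * varZ) * q + (varY + varT) * (of_nat n * q + euler_y q)"

definition step_reflected :: "nat \<Rightarrow> mpoly4 \<Rightarrow> mpoly4" where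
  "step_reflected n q =
     (varX + of_nat (Suc n) * varZ + varT) * q + (varY - varZ) * (of_nat n * q + euler_y q)"

definition sym_subst :: "nat \<Rightarrow> mpoly4 \<Rightarrow> mpoly4" where
  "sym_subst n = eval4 (varX + of_nat n * varZ + of_nat n * varT) varY (- varT) (- varZ)"

definition shift_x :: "mpoly4 \<Rightarrow> mpoly4" where
  "shift_x = eval4 (varX + varZ + varT) varY varZ varT"

lemma Q_Suc: "0 < n \<Longrightarrow> Q (Suc n) = step n (Q n)"
  by (cases n) (simp_all add: step_def euler_y_def Let_def algebra_simps)

lemma sym_subst_step: "sym_subst (Suc n) (step n q) = step_reflected n (sym_subst (Suc n) q)"
proof -
  interpret comm_ring_hom "sym_subst (Suc n)"
    unfolding sym_subst_def by (rule comm_ring_hom_eval4)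
  show ?thesis
    unfolding step_def step_reflected_def
    by (simp add: hom_add hom_mult hom_diff hom_uminus hom_of_nat)
      (simp add: sym_subst_def eval4_euler_y pderiv_add pderiv_mult pderiv_minus algebra_simps)
qed

lemma sym_subst_Suc_sym_subst: "sym_subst (Suc n) (sym_subst n p) = shift_x p"
proof -
  interpret comm_ring_hom "sym_subst (Suc n)"
    unfolding sym_subst_def by (rule comm_ring_hom_eval4)
  show ?thesis
    unfolding sym_subst_def[of n] comm_ring_hom_eval4_commute[OF comm_ring_hom_axioms]
    by (simp add: hom_add hom_mult hom_uminus hom_of_nat)
      (simp add: sym_subst_def shift_x_def algebra_simps)
qed

lemma shift_x_step: "shift_x (step n q) = step n (shift_x q) + (varZ + varT) * shift_x q"
proof -
  interpret comm_ring_hom shift_x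
    unfolding shift_x_def by (rule comm_ring_hom_eval4)
  show ?thesis
    unfolding step_def
    by (simp add: hom_add hom_mult hom_of_nat)
      (simp add: shift_x_def eval4_euler_y pderiv_add algebra_simps)
qed

lemma step_reflected_Suc_step:
  "step_reflected (Suc n) (step n q + (varZ + varT) * q) = step (Suc n) (step_reflected n q)"
  by (simp add: step_def step_reflected_def euler_y_add euler_y_diff euler_y_mult euler_y_const
      euler_y_varY)
    (simp add: algebra_simps)

lemma step_reflected_shift_x_Q: "0 < n \<Longrightarrow> step_reflected n (shift_x (Q n)) = Q (Suc n)"
proof (induction n rule: nat_induct_non_zero)
  case 1
  have "shift_x 1 = 1"
    unfolding shift_x_def by (rule comm_ring_hom.hom_one[OF comm_ring_hom_eval4])
  then show ?case
    by (simp add: step_reflected_def euler_y_const dY_def algebra_simps)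
next
  case (Suc n)
  have "step_reflected (Suc n) (shift_x (Q (Suc n)))
      = step_reflected (Suc n) (step n (shift_x (Q n)) + (varZ + varT) * shift_x (Q n))"
    by (simp add: Q_Suc Suc.hyps shift_x_step)
  also have "\<dots> = step (Suc n) (Q (Suc n))"
    by (simp add: step_reflected_Suc_step Suc.IH)
  finally show ?case
    by (simp only: Q_Suc zero_less_Suc)
qed

lemma sym_subst_Q: "0 < n \<Longrightarrow> sym_subst n (Q n) = Q n"
proof (induction n rule: nat_induct_non_zero)
  case 1
  show ?case
    unfolding sym_subst_def by (simp add: comm_ring_hom.hom_one[OF comm_ring_hom_eval4])
next
  case (Suc n)
  have "sym_subst (Suc n) (Q (Suc n)) = step_reflected n (sym_subst (Suc n) (Q n))"
    by (simp add: Q_Suc Suc.hyps sym_subst_step)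
  also have "\<dots> = step_reflected n (shift_x (Q n))"
    by (metis Suc.IH sym_subst_Suc_sym_subst)
  also have "\<dots> = Q (Suc n)"
    by (rule step_reflected_shift_x_Q[OF Suc.hyps])
  finally show ?case .
qed

theorem theorem1p1:
  fixes n :: nat
  assumes "n \<ge> 1"
  shows "Q n = eval4 (varX + of_nat n * varZ + of_nat n * varT) varY (- varT) (- varZ) (Q n)"
  using sym_subst_Q[of n] assms by (simp add: sym_subst_def)

end
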